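(* Let $k\ge1$, $N\ge 1$, $h=1/N$, and let $\tilde u:[0,T]\to\mathcal{V}_h^k$ be a continuously differentiable solution of the semi-discrete problem $$(\tilde u_t,\chi)+(P[\tilde u_{xt}],\chi_x)=(P[\tilde u+\tfrac12\tilde u^2],\chi_x)\quad\text{for all }\chi\in\mathcal{V}_h^k,\ t\in[0,T].$$ Then the mass $\mathcal{M}(t;\tilde u)=\int_0^1\tilde u\,dx$ and the energy $\mathcal{E}(t;\tilde u)=\frac12\int_0^1\big(\tilde u^2+\tfrac13\tilde u^3\big)\,dx$ satisfy $\frac{d}{dt}\mathcal{M}(t;\tilde u)=0$ and $\frac{d}{dt}\mathcal{E}(t;\tilde u)=0$.
   Context: $C_p$ is the space of continuous $1$-periodic real functions; $x_i=ih$; $\mathcal{V}_h^k=\{\phi\in C_p:\ \phi|_{[x_{i-1},x_i]}\text{ is a polynomial of degree}\le k,\ i=1,\dots,N\}$. $(\cdot,\cdot)$ is the $L^2(0,1)$ inner product and $P$ the $L^2(0,1)$-orthogonal projection onto $\mathcal{V}_h^k$. Subscripts $x,t$ denote (piecewise) spatial and time derivatives. *)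

theory Defs
  imports "HOL-Analysis.Analysis" "HOL-Computational_Algebra.Polynomial"
begin

definition Vh :: "nat \<Rightarrow> nat \<Rightarrow> (real \<Rightarrow> real) set" where
  "Vh N k = {\<phi>. continuous_on UNIV \<phi> \<and> (\<forall>x. \<phi> (x + 1) = \<phi> x) \<and>
      (\<forall>i\<in>{1..N}. \<exists>p :: real poly. degree p \<le> k \<and>
         (\<forall>x\<in>{real (i - 1) / real N .. real i / real N}. \<phi> x = poly p x))}"

definition L2ip :: "(real \<Rightarrow> real) \<Rightarrow> (real \<Rightarrow> real) \<Rightarrow> real" where
  "L2ip f g = integral {0..1} (\<lambda>x. f x * g x)"

definition L2proj :: "nat \<Rightarrow> nat \<Rightarrow> (real \<Rightarrow> real) \<Rightarrow> (real \<Rightarrow> real)" where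
  "L2proj N k g = (THE \<phi>. \<phi> \<in> Vh N k \<and> (\<forall>w\<in>Vh N k. L2ip \<phi> w = L2ip g w))"

definition mass :: "(real \<Rightarrow> real) \<Rightarrow> real" where
  "mass v = integral {0..1} v"

definition energy :: "(real \<Rightarrow> real) \<Rightarrow> real" where
  "energy v = 1/2 * integral {0..1} (\<lambda>x. (v x)\<^sup>2 + (v x)^3 / 3)"

end

theory Submission
  imports Defs
begin

text \<open>Testing the scheme with \<open>\<chi> = 1\<close> gives conservation of mass. For the energy write
  \<open>w = P[u + u\<^sup>2/2]\<close> and \<open>z = P[u\<^sub>x\<^sub>t]\<close>. By periodicity
  \<open>(\<phi>, \<psi>\<^sub>x) = -(\<psi>, \<phi>\<^sub>x)\<close> on \<open>V\<^sub>h\<^sup>k\<close>, so \<open>(\<phi>, \<phi>\<^sub>x) = 0\<close> and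
  \<open>(u\<^sub>t, z) = (u\<^sub>x\<^sub>t, u\<^sub>t) = 0\<close>. Testing with \<open>\<chi> = z\<close> then gives \<open>(w, z\<^sub>x) = 0\<close>, and
  testing with \<open>\<chi> = w\<close> gives \<open>(u\<^sub>t, w) = -(z, w\<^sub>x) = (w, z\<^sub>x) = 0\<close>. Since
  \<open>u\<^sub>t \<in> V\<^sub>h\<^sup>k\<close>, this says \<open>(u + u\<^sup>2/2, u\<^sub>t) = 0\<close>, which is \<open>d\<E>/dt\<close>.
  The projection \<open>P\<close> is well defined because \<open>V\<^sub>h\<^sup>k\<close> is finite dimensional, and
  differentiation under the integral sign is justified by the joint continuity of \<open>u(t, x)\<close>,
  which follows from the nodal (Lagrange) representation on each cell.\<close>

section \<open>Lagrange interpolation\<close>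

definition lagrange_basis :: "(nat \<Rightarrow> 'a::field) \<Rightarrow> nat \<Rightarrow> nat \<Rightarrow> 'a poly" where
  "lagrange_basis z k j =
     smult (1 / (\<Prod>i\<in>{..k}-{j}. z j - z i)) (\<Prod>i\<in>{..k}-{j}. [:- z i, 1:])"

lemma poly_lagrange_basis:
  assumes "inj_on z {..k}" "j \<le> k" "i \<le> k"
  shows "poly (lagrange_basis z k j) (z i) = (if i = j then 1 else 0)"
proof (cases "i = j")
  case True
  have "(\<Prod>l\<in>{..k}-{j}. z j - z l) \<noteq> 0"
    using assms by (auto simp: inj_on_def)
  then show ?thesis using True by (simp add: lagrange_basis_def poly_prod)
next
  case False
  have "(\<Prod>l\<in>{..k}-{j}. poly [:- z l, 1:] (z i)) = 0"
    by (rule prod_zero) (use False assms in auto)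
  then show ?thesis using False by (simp add: lagrange_basis_def poly_prod)
qed

lemma degree_lagrange_basis:
  assumes "j \<le> k"
  shows "degree (lagrange_basis z k j) \<le> k"
proof -
  have "degree (\<Prod>i\<in>{..k}-{j}. [:- z i, 1:]) \<le> sum (degree \<circ> (\<lambda>i. [:- z i, 1:])) ({..k}-{j})"
    by (rule degree_prod_sum_le) simp
  also have "\<dots> = k" using assms by simp
  finally show ?thesis
    unfolding lagrange_basis_def using degree_smult_le order_trans by blast
qed

lemma lagrange_interpolation:
  fixes p :: "'a::field poly"
  assumes "inj_on z {..k}" "degree p \<le> k"
  shows "poly p x = (\<Sum>j\<le>k. poly p (z j) * poly (lagrange_basis z k j) x)"
proof -
  let ?q = "\<Sum>j\<le>k. smult (poly p (z j)) (lagrange_basis z k j)"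
  have card: "card (z ` {..k}) = Suc k"
    using assms(1) by (simp add: card_image)
  have "degree ?q \<le> k"
    by (intro degree_sum_le) (auto intro: order_trans[OF degree_smult_le] degree_lagrange_basis)
  moreover have "poly p y = poly ?q y" if y: "y \<in> z ` {..k}" for y
  proof -
    obtain i where i: "i \<le> k" "y = z i" using y by auto
    have "poly ?q y = (\<Sum>j\<le>k. poly p (z j) * poly (lagrange_basis z k j) (z i))"
      using i by (simp add: poly_sum)
    also have "\<dots> = (\<Sum>j\<le>k. if j = i then poly p (z j) else 0)"
      using i(1) by (intro sum.cong) (auto simp: poly_lagrange_basis[OF assms(1)])
    finally show ?thesis using i by simp
  qed
  ultimately have "p = ?q"
    using assms(2) card by (intro poly_eqI_degree[where A = "z ` {..k}"]) auto
  then have "poly p x = poly ?q x" by (rule arg_cong[where f = "\<lambda>q. poly q x"])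
  also have "\<dots> = (\<Sum>j\<le>k. poly p (z j) * poly (lagrange_basis z k j) x)"
    by (simp add: poly_sum)
  finally show ?thesis .
qed

section \<open>Finite spans and \<open>L\<^sup>2\<close> projections\<close>

definition lincomb_closed :: "('a \<Rightarrow> 'b::field) set \<Rightarrow> bool" where
  "lincomb_closed W \<longleftrightarrow> (\<forall>f\<in>W. \<forall>g\<in>W. \<forall>a b. (\<lambda>x. a * f x + b * g x) \<in> W)"

lemma finitely_spanned_if_determined_by_values:
  fixes W :: "('a \<Rightarrow> 'b::field) set"
  assumes "finite Z" "lincomb_closed W"
    and "\<forall>\<phi>\<in>W. (\<forall>z\<in>Z. \<phi> z = 0) \<longrightarrow> \<phi> = (\<lambda>x. 0)"
  shows "\<exists>(m::nat) b. (\<forall>i<m. b i \<in> W) \<and> (\<forall>\<phi>\<in>W. \<exists>c. \<phi> = (\<lambda>x. \<Sum>i<m. c i * b i x))"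
  using assms
proof (induction Z arbitrary: W rule: finite_induct)
  case empty
  then show ?case by (intro exI[of _ "0::nat"]) simp
next
  case (insert z Z)
  define W' where "W' = {\<phi>\<in>W. \<phi> z = 0}"
  have "lincomb_closed W'"
    using insert.prems(1) by (auto simp: lincomb_closed_def W'_def)
  moreover have "\<forall>\<phi>\<in>W'. (\<forall>z\<in>Z. \<phi> z = 0) \<longrightarrow> \<phi> = (\<lambda>x. 0)"
    using insert.prems(2) by (auto simp: W'_def)
  ultimately have "\<exists>(m::nat) b. (\<forall>i<m. b i \<in> W') \<and> (\<forall>\<phi>\<in>W'. \<exists>c. \<phi> = (\<lambda>x. \<Sum>i<m. c i * b i x))"
    by (rule insert.IH)
  then obtain m :: nat and b where b: "\<forall>i<m. b i \<in> W'"
    and span: "\<forall>\<phi>\<in>W'. \<exists>c. \<phi> = (\<lambda>x. \<Sum>i<m. c i * b i x)"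
    by blast
  show ?case
  proof (cases "\<exists>\<phi>\<^sub>1\<in>W. \<phi>\<^sub>1 z \<noteq> 0")
    case False
    then have "W' = W" unfolding W'_def by auto
    then show ?thesis using b span by blast
  next
    case True
    then obtain \<phi>\<^sub>1 where \<phi>\<^sub>1: "\<phi>\<^sub>1 \<in> W" "\<phi>\<^sub>1 z \<noteq> 0" by blast
    define b' where "b' = b(m := \<phi>\<^sub>1)"
    have "\<exists>c. \<phi> = (\<lambda>x. \<Sum>i<Suc m. c i * b' i x)" if \<phi>: "\<phi> \<in> W" for \<phi>
    proof -
      define a where "a = \<phi> z / \<phi>\<^sub>1 z"
      have "(\<lambda>x. 1 * \<phi> x + (- a) * \<phi>\<^sub>1 x) \<in> W"
        using insert.prems(1) \<phi> \<phi>\<^sub>1 unfolding lincomb_closed_def by blast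
      then have "(\<lambda>x. \<phi> x - a * \<phi>\<^sub>1 x) \<in> W'"
        using \<phi>\<^sub>1 by (simp add: W'_def a_def)
      then obtain c where c: "(\<lambda>x. \<phi> x - a * \<phi>\<^sub>1 x) = (\<lambda>x. \<Sum>i<m. c i * b i x)"
        using span by blast
      have "(\<Sum>i<m. (c(m := a)) i * b' i x) = (\<Sum>i<m. c i * b i x)" for x
        by (rule sum.cong) (auto simp: b'_def)
      then have "\<phi> x = (\<Sum>i<Suc m. (c(m := a)) i * b' i x)" for x
        using fun_cong[OF c, of x] by (simp add: b'_def diff_eq_eq)
      then show ?thesis by blast
    qed
    moreover have "\<forall>i<Suc m. b' i \<in> W"
      using b \<phi>\<^sub>1 by (auto simp: b'_def W'_def less_Suc_eq)
    ultimately show ?thesis by blast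
  qed
qed

lemma L2ip_commute: "L2ip f g = L2ip g f"
  unfolding L2ip_def by (simp add: mult.commute)

lemma L2ip_scale_left: "L2ip (\<lambda>x. a * p x) h = a * L2ip p h"
  unfolding L2ip_def by (simp add: mult.assoc)

lemma L2ip_add_left:
  assumes "(\<lambda>x. p x * h x) integrable_on {0..1}" "(\<lambda>x. q x * h x) integrable_on {0..1}"
  shows "L2ip (\<lambda>x. p x + q x) h = L2ip p h + L2ip q h"
  using integral_add[OF assms] by (simp add: L2ip_def distrib_right)

lemma L2ip_diff_left:
  assumes "(\<lambda>x. p x * h x) integrable_on {0..1}" "(\<lambda>x. q x * h x) integrable_on {0..1}"
  shows "L2ip (\<lambda>x. p x - q x) h = L2ip p h - L2ip q h"
  using integral_diff[OF assms] by (simp add: L2ip_def left_diff_distrib)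

lemma L2ip_add_right:
  assumes "(\<lambda>x. h x * p x) integrable_on {0..1}" "(\<lambda>x. h x * q x) integrable_on {0..1}"
  shows "L2ip h (\<lambda>x. p x + q x) = L2ip h p + L2ip h q"
  using integral_add[OF assms] by (simp add: L2ip_def distrib_left)

lemma integrable_mult_sum:
  fixes f :: "real \<Rightarrow> real" and m :: nat
  assumes "\<And>i. i < m \<Longrightarrow> (\<lambda>x. f x * b i x) integrable_on S"
  shows "(\<lambda>x. f x * (\<Sum>i<m. c i * b i x)) integrable_on S"
proof -
  have "(\<lambda>x. \<Sum>i<m. c i * (f x * b i x)) integrable_on S"
    using assms by (intro integrable_sum integrable_on_mult_right) auto
  then show ?thesis by (simp add: sum_distrib_left mult.left_commute)
qed

lemma L2ip_sum_right:
  fixes m :: nat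
  assumes "\<And>i. i < m \<Longrightarrow> (\<lambda>x. f x * b i x) integrable_on {0..1}"
  shows "L2ip f (\<lambda>x. \<Sum>i<m. c i * b i x) = (\<Sum>i<m. c i * L2ip f (b i))"
proof -
  have "L2ip f (\<lambda>x. \<Sum>i<m. c i * b i x) = integral {0..1} (\<lambda>x. \<Sum>i<m. c i * (f x * b i x))"
    unfolding L2ip_def by (simp add: sum_distrib_left mult.left_commute)
  also have "\<dots> = (\<Sum>i<m. c i * L2ip f (b i))"
    using assms by (subst integral_sum) (auto intro: integrable_on_mult_right simp: L2ip_def)
  finally show ?thesis .
qed

lemma integrable_continuous_mult:
  fixes f g :: "real \<Rightarrow> real"
  shows "continuous_on {a..b} f \<Longrightarrow> continuous_on {a..b} g \<Longrightarrow> (\<lambda>x. f x * g x) integrable_on {a..b}"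
  by (intro integrable_continuous_interval continuous_on_mult)

lemma L2ip_eq_on_span:
  fixes m :: nat
  assumes "\<And>i. i < m \<Longrightarrow> (\<lambda>x. f x * b i x) integrable_on {0..1}"
    and "\<And>i. i < m \<Longrightarrow> (\<lambda>x. g x * b i x) integrable_on {0..1}"
    and "\<And>j. j < m \<Longrightarrow> L2ip f (b j) = L2ip g (b j)"
  shows "L2ip f (\<lambda>x. \<Sum>i<m. d i * b i x) = L2ip g (\<lambda>x. \<Sum>i<m. d i * b i x)"
  using assms by (simp add: L2ip_sum_right)

lemma L2ip_self_eq_0_imp_eq_0:
  assumes "continuous_on {0..1} e" "L2ip e e = 0" "x \<in> {0..1}"
  shows "e x = 0"
proof -
  have "((\<lambda>x. e x * e x) has_integral 0) (cbox 0 1)"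
    using assms(1,2) unfolding L2ip_def
    by (metis cbox_interval has_integral_integrable_integral integrable_continuous_mult)
  moreover have "continuous_on (cbox 0 1) (\<lambda>x. e x * e x)"
    using assms(1) by (simp add: cbox_interval continuous_on_mult)
  ultimately have "e x * e x = 0"
    using assms(3) by (intro has_integral_0_cbox_imp_0[where f = "\<lambda>x. e x * e x"]) auto
  then show ?thesis by simp
qed

lemma L2ip_self_eq_0_imp_L2ip_eq_0:
  assumes "continuous_on {0..1} e" "L2ip e e = 0"
  shows "L2ip f e = 0"
proof -
  have "L2ip f e = L2ip f (\<lambda>x. 0)"
    unfolding L2ip_def by (rule integral_cong) (simp add: L2ip_self_eq_0_imp_eq_0[OF assms])
  then show ?thesis by (simp add: L2ip_def)
qed

lemma exists_L2ip_correction: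
  assumes "continuous_on {0..1} \<phi>" "continuous_on {0..1} e"
  shows "\<exists>\<alpha>. L2ip (\<lambda>x. \<phi> x + \<alpha> * e x) e = L2ip g e"
proof (cases "L2ip e e = 0")
  case True
  then show ?thesis
    using L2ip_self_eq_0_imp_L2ip_eq_0[OF assms(2)] by (intro exI[of _ 0]) simp
next
  case False
  define \<alpha> where "\<alpha> = (L2ip g e - L2ip \<phi> e) / L2ip e e"
  have "L2ip (\<lambda>x. \<phi> x + \<alpha> * e x) e = L2ip \<phi> e + \<alpha> * L2ip e e"
    using assms
    by (subst L2ip_add_left) (auto intro!: integrable_continuous_mult continuous_on_mult
        simp: L2ip_scale_left)
  also have "\<dots> = L2ip g e"
    using False by (simp add: \<alpha>_def)
  finally show ?thesis by blast
qed

text \<open>Gram--Schmidt: \<open>e = b\<^sub>m - \<psi>\<close> is orthogonal to \<open>b\<^sub>0, \<dots>, b\<^sub>m\<^sub>-\<^sub>1\<close>, so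
  correcting the projection onto the smaller span by a multiple of \<open>e\<close> fixes the last
  equation without disturbing the others.\<close>
lemma L2_projection_onto_span_exists:
  fixes b :: "nat \<Rightarrow> real \<Rightarrow> real" and g :: "real \<Rightarrow> real"
  assumes "\<And>i. i < m \<Longrightarrow> continuous_on {0..1} (b i)"
    and "\<And>i. i < m \<Longrightarrow> (\<lambda>x. g x * b i x) integrable_on {0..1}"
  shows "\<exists>c. \<forall>j<m. L2ip (\<lambda>x. \<Sum>i<m. c i * b i x) (b j) = L2ip g (b j)"
  using assms
proof (induction m arbitrary: g)
  case 0
  then show ?case by simp
next
  case (Suc m)
  have b: "continuous_on {0..1} (b i)" if "i \<le> m" for i
    using Suc.prems(1) that by simp
  have gb: "(\<lambda>x. g x * b i x) integrable_on {0..1}" if "i \<le> m" for i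
    using Suc.prems(2) that by simp
  obtain c0 where c0: "\<forall>j<m. L2ip (\<lambda>x. \<Sum>i<m. c0 i * b i x) (b j) = L2ip g (b j)"
    using Suc.IH[of g] b gb by (meson less_imp_le)
  obtain d where d: "\<forall>j<m. L2ip (\<lambda>x. \<Sum>i<m. d i * b i x) (b j) = L2ip (b m) (b j)"
    using Suc.IH[of "b m"] b integrable_continuous_mult[OF b[of m] b] by (meson less_imp_le order_refl)
  define \<phi>0 where "\<phi>0 = (\<lambda>x. \<Sum>i<m. c0 i * b i x)"
  define \<psi> where "\<psi> = (\<lambda>x. \<Sum>i<m. d i * b i x)"
  define e where "e = (\<lambda>x. b m x - \<psi> x)"
  have cont: "continuous_on {0..1} \<phi>0" "continuous_on {0..1} \<psi>" "continuous_on {0..1} e"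
    using b unfolding \<phi>0_def \<psi>_def e_def by (auto intro!: continuous_intros)
  obtain \<alpha> where \<alpha>: "L2ip (\<lambda>x. \<phi>0 x + \<alpha> * e x) e = L2ip g e"
    using exists_L2ip_correction[OF cont(1,3)] by blast
  define \<phi> where "\<phi> = (\<lambda>x. \<phi>0 x + \<alpha> * e x)"
  have \<phi>: "continuous_on {0..1} \<phi>"
    using cont unfolding \<phi>_def by (intro continuous_intros)
  have e_orth: "L2ip e (b j) = 0" if "j < m" for j
  proof -
    have "L2ip e (b j) = L2ip (b m) (b j) - L2ip \<psi> (b j)"
      unfolding e_def using that b cont(2) by (intro L2ip_diff_left integrable_continuous_mult) auto
    then show ?thesis using d that by (simp add: \<psi>_def)
  qed
  have \<phi>_low: "L2ip \<phi> (b j) = L2ip g (b j)" if "j < m" for j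
  proof -
    have "L2ip \<phi> (b j) = L2ip \<phi>0 (b j) + \<alpha> * L2ip e (b j)"
      unfolding \<phi>_def using that b cont
      by (subst L2ip_add_left) (auto intro!: integrable_continuous_mult continuous_on_mult
          simp: L2ip_scale_left)
    then show ?thesis using e_orth c0 that by (simp add: \<phi>0_def)
  qed
  have g\<psi>: "(\<lambda>x. g x * \<psi> x) integrable_on {0..1}"
    unfolding \<psi>_def by (rule integrable_mult_sum) (use gb in auto)
  have bm: "b m = (\<lambda>x. e x + \<psi> x)"
    by (simp add: e_def)
  have "L2ip \<phi> (b m) = L2ip \<phi> e + L2ip \<phi> \<psi>"
    unfolding bm using \<phi> cont by (intro L2ip_add_right integrable_continuous_mult)
  also have "\<dots> = L2ip g e + L2ip g \<psi>"
    using \<alpha> L2ip_eq_on_span[of m \<phi> b g d] \<phi>_low \<phi> b gb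
    by (simp add: \<phi>_def \<psi>_def integrable_continuous_mult)
  also have "\<dots> = L2ip g (b m)"
    using integrable_diff[OF gb[of m] g\<psi>] g\<psi>
    unfolding bm by (intro L2ip_add_right[symmetric]) (simp_all add: e_def right_diff_distrib)
  finally have \<phi>_high: "L2ip \<phi> (b m) = L2ip g (b m)" .
  define c where "c = (\<lambda>i. c0 i - \<alpha> * d i)(m := \<alpha>)"
  have sum_eq: "(\<lambda>x. \<Sum>i<Suc m. c i * b i x) = \<phi>"
  proof
    fix x
    have "(\<Sum>i<m. c i * b i x) = \<phi>0 x - \<alpha> * \<psi> x"
      by (simp add: c_def \<phi>0_def \<psi>_def algebra_simps sum_subtractf sum_distrib_left)
    then show "(\<Sum>i<Suc m. c i * b i x) = \<phi> x"
      by (simp add: c_def \<phi>_def e_def algebra_simps)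
  qed
  have "\<forall>j<Suc m. L2ip \<phi> (b j) = L2ip g (b j)"
    using \<phi>_low \<phi>_high by (simp add: less_Suc_eq)
  then show ?case
    unfolding sum_eq[symmetric] by blast
qed

section \<open>The finite element space\<close>

abbreviation cell :: "nat \<Rightarrow> nat \<Rightarrow> real set" where
  "cell N i \<equiv> {real (i - 1) / real N .. real i / real N}"

lemma Vh_continuous: "\<phi> \<in> Vh N k \<Longrightarrow> continuous_on S \<phi>"
  unfolding Vh_def using continuous_on_subset by blast

lemma Vh_periodic: "\<phi> \<in> Vh N k \<Longrightarrow> \<phi> (x + 1) = \<phi> x"
  by (simp add: Vh_def)

lemma Vh_poly_on_cell:
  "\<phi> \<in> Vh N k \<Longrightarrow> i \<in> {1..N} \<Longrightarrow> \<exists>p. degree p \<le> k \<and> (\<forall>x\<in>cell N i. \<phi> x = poly p x)"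
  by (simp add: Vh_def)

lemma Vh_lincomb:
  assumes "\<phi> \<in> Vh N k" "\<psi> \<in> Vh N k"
  shows "(\<lambda>x. a * \<phi> x + b * \<psi> x) \<in> Vh N k"
proof -
  have "\<exists>r. degree r \<le> k \<and> (\<forall>x\<in>cell N i. a * \<phi> x + b * \<psi> x = poly r x)"
    if i: "i \<in> {1..N}" for i
  proof -
    obtain p q where "degree p \<le> k" "\<forall>x\<in>cell N i. \<phi> x = poly p x"
      "degree q \<le> k" "\<forall>x\<in>cell N i. \<psi> x = poly q x"
      using Vh_poly_on_cell[OF assms(1) i] Vh_poly_on_cell[OF assms(2) i] by blast
    moreover have "degree (smult a p + smult b q) \<le> k" if "degree p \<le> k" "degree q \<le> k"
      using that by (meson degree_add_le degree_smult_le order_trans)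
    ultimately show ?thesis
      by (intro exI[of _ "smult a p + smult b q"]) auto
  qed
  moreover have "continuous_on UNIV (\<lambda>x. a * \<phi> x + b * \<psi> x)"
    using Vh_continuous[OF assms(1)] Vh_continuous[OF assms(2)]
    by (intro continuous_on_add continuous_on_mult continuous_on_const)
  ultimately show ?thesis
    using assms by (simp add: Vh_def)
qed

lemma Vh_integrable_mult:
  "\<phi> \<in> Vh N k \<Longrightarrow> \<psi> \<in> Vh N k \<Longrightarrow> (\<lambda>x. \<phi> x * \<psi> x) integrable_on {a..b}"
  by (intro integrable_continuous_mult Vh_continuous)

lemma lincomb_closed_Vh: "lincomb_closed (Vh N k)"
  unfolding lincomb_closed_def using Vh_lincomb by blast

lemma Vh_const: "(\<lambda>x. c) \<in> Vh N k"
  unfolding Vh_def by (auto intro!: exI[of _ "[:c:]"])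

lemma Vh_sum:
  fixes m :: nat
  assumes "\<And>i. i < m \<Longrightarrow> b i \<in> Vh N k"
  shows "(\<lambda>x. \<Sum>i<m. c i * b i x) \<in> Vh N k"
  using assms
proof (induction m)
  case 0
  then show ?case using Vh_const[of 0] by simp
next
  case (Suc m)
  then have "(\<lambda>x. 1 * (\<Sum>i<m. c i * b i x) + c m * b m x) \<in> Vh N k"
    by (intro Vh_lincomb) auto
  then show ?case by simp
qed

lemma Vh_periodic_int:
  assumes "\<phi> \<in> Vh N k"
  shows "\<phi> (x + of_int n) = \<phi> x"
proof -
  have nat: "\<phi> (y + of_nat n) = \<phi> y" for y and n :: nat
  proof (induction n)
    case (Suc n)
    then show ?case
      using Vh_periodic[OF assms, of "y + of_nat n"] by (simp add: add_ac)
  qed simp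
  show ?thesis
  proof (cases "n \<ge> 0")
    case True
    then show ?thesis using nat[of x "nat n"] by simp
  next
    case False
    then show ?thesis using nat[of "x + of_int n" "nat (- n)"] by simp
  qed
qed

lemma Vh_eq_0_if_eq_0_on_unit_interval:
  assumes "\<phi> \<in> Vh N k" "\<And>x. x \<in> {0..1} \<Longrightarrow> \<phi> x = 0"
  shows "\<phi> = (\<lambda>x. 0)"
proof
  fix x
  have "\<phi> x = \<phi> (frac x)"
    using Vh_periodic_int[OF assms(1), of "frac x" "\<lfloor>x\<rfloor>"] by (simp add: frac_def)
  moreover have "frac x \<in> {0..1}"
    using frac_lt_1[of x] by (auto simp: frac_ge_0)
  ultimately show "\<phi> x = 0" using assms(2) by simp
qed

lemma cell_subset_unit_interval: "i \<in> {1..N} \<Longrightarrow> cell N i \<subseteq> {0..1}"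
  by (auto simp: divide_le_eq_1 order_trans)

lemma unit_interval_covered_by_cells:
  assumes "N \<ge> 1" "x \<in> {0..1}"
  shows "\<exists>i\<in>{1..N}. x \<in> cell N i"
proof (cases "x = 1")
  case True
  then show ?thesis using assms by (intro bexI[of _ N]) auto
next
  case False
  define i where "i = nat \<lfloor>x * N\<rfloor> + 1"
  have N: "real N > 0" using assms by simp
  have floor_nonneg: "\<lfloor>x * N\<rfloor> \<ge> 0" using assms by simp
  have "x * N < N" using False assms N by simp
  then have "nat \<lfloor>x * N\<rfloor> < N" using floor_nonneg by linarith
  then have "i \<in> {1..N}" unfolding i_def by auto
  moreover have "real (i - 1) = \<lfloor>x * N\<rfloor>" "real i = \<lfloor>x * N\<rfloor> + 1"
    unfolding i_def using floor_nonneg by auto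
  moreover have "\<lfloor>x * N\<rfloor> \<le> x * N" "x * N \<le> \<lfloor>x * N\<rfloor> + 1" by linarith+
  ultimately show ?thesis using N by (intro bexI[of _ i]) (auto simp: field_simps)
qed

lemma unit_interval_covered_by_open_cells:
  assumes "N \<ge> 1" "x \<in> {0<..<1}" "x \<notin> (\<lambda>j. real j / real N) ` {..N}"
  shows "\<exists>i\<in>{1..N}. x \<in> {real (i - 1) / real N <..< real i / real N}"
proof -
  obtain i where i: "i \<in> {1..N}" "x \<in> cell N i"
    using unit_interval_covered_by_cells[OF assms(1), of x] assms(2) by auto
  have "real (i - 1) / real N \<in> (\<lambda>j. real j / real N) ` {..N}"
    using i(1) by (intro rev_image_eqI[of "i - 1"]) auto
  moreover have "real i / real N \<in> (\<lambda>j. real j / real N) ` {..N}"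
    using i(1) by (intro rev_image_eqI[of i]) auto
  ultimately show ?thesis using i assms(3) by (intro bexI[of _ i]) auto
qed

definition cell_node :: "nat \<Rightarrow> nat \<Rightarrow> nat \<Rightarrow> nat \<Rightarrow> real" where
  "cell_node N k i j = real (i - 1) / real N + real j / (real (Suc k) * real N)"

lemma inj_on_cell_node: "N \<ge> 1 \<Longrightarrow> inj_on (cell_node N k i) {..k}"
  by (auto simp: inj_on_def cell_node_def divide_cancel_right)

lemma cell_node_in_cell:
  assumes "N \<ge> 1" "i \<ge> 1" "j \<le> k"
  shows "cell_node N k i j \<in> cell N i"
proof -
  have "real j / (real (Suc k) * real N) \<le> real (Suc k) / (real (Suc k) * real N)"
    using assms by (intro divide_right_mono) auto
  also have "\<dots> = 1 / real N" by simp
  finally have "real j / (real (Suc k) * real N) \<le> 1 / real N" .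
  moreover have "real i / real N = real (i - 1) / real N + 1 / real N"
    using assms by (simp add: of_nat_diff field_simps)
  ultimately show ?thesis by (auto simp: cell_node_def)
qed

lemma Vh_lagrange_representation:
  assumes "\<phi> \<in> Vh N k" "N \<ge> 1" "i \<in> {1..N}" "x \<in> cell N i"
  shows "\<phi> x = (\<Sum>j\<le>k. \<phi> (cell_node N k i j) * poly (lagrange_basis (cell_node N k i) k j) x)"
proof -
  obtain p where p: "degree p \<le> k" "\<forall>x\<in>cell N i. \<phi> x = poly p x"
    using Vh_poly_on_cell[OF assms(1,3)] by blast
  have "\<phi> (cell_node N k i j) = poly p (cell_node N k i j)" if "j \<le> k" for j
    using p(2) cell_node_in_cell[OF assms(2) _ that] assms(3) by auto
  then show ?thesis
    using lagrange_interpolation[OF inj_on_cell_node[OF assms(2)] p(1), of x] p(2) assms(4)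
    by simp
qed

lemma Vh_eq_0_if_eq_0_at_nodes:
  assumes "\<phi> \<in> Vh N k" "N \<ge> 1" "\<forall>i\<in>{1..N}. \<forall>j\<le>k. \<phi> (cell_node N k i j) = 0"
  shows "\<phi> = (\<lambda>x. 0)"
proof (rule Vh_eq_0_if_eq_0_on_unit_interval[OF assms(1)])
  fix x :: real
  assume "x \<in> {0..1}"
  then obtain i where "i \<in> {1..N}" "x \<in> cell N i"
    using unit_interval_covered_by_cells[OF assms(2)] by blast
  then show "\<phi> x = 0"
    using Vh_lagrange_representation[OF assms(1,2)] assms(3) by simp
qed

lemma Vh_finitely_spanned:
  assumes "N \<ge> 1"
  shows "\<exists>(m::nat) b. (\<forall>i<m. b i \<in> Vh N k) \<and> (\<forall>\<phi>\<in>Vh N k. \<exists>c. \<phi> = (\<lambda>x. \<Sum>i<m. c i * b i x))"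
proof (rule finitely_spanned_if_determined_by_values[OF _ lincomb_closed_Vh])
  let ?nodes = "(\<lambda>(i, j). cell_node N k i j) ` ({1..N} \<times> {..k})"
  show "finite ?nodes" by simp
  show "\<forall>\<phi>\<in>Vh N k. (\<forall>z\<in>?nodes. \<phi> z = 0) \<longrightarrow> \<phi> = (\<lambda>x. 0)"
    using Vh_eq_0_if_eq_0_at_nodes[OF _ assms] by auto
qed

lemma ex1_L2_projection_Vh:
  assumes "N \<ge> 1" and g: "\<And>\<phi>. \<phi> \<in> Vh N k \<Longrightarrow> (\<lambda>x. g x * \<phi> x) integrable_on {0..1}"
  shows "\<exists>!\<phi>. \<phi> \<in> Vh N k \<and> (\<forall>w\<in>Vh N k. L2ip \<phi> w = L2ip g w)"
proof (rule ex_ex1I)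
  obtain m :: nat and b where b: "\<forall>i<m. b i \<in> Vh N k"
    and span: "\<forall>\<phi>\<in>Vh N k. \<exists>c. \<phi> = (\<lambda>x. \<Sum>i<m. c i * b i x)"
    using Vh_finitely_spanned[OF assms(1)] by blast
  have "continuous_on {0..1} (b i)" if "i < m" for i
    using b that by (intro Vh_continuous[of "b i" N k]) simp
  then obtain c where c: "\<forall>j<m. L2ip (\<lambda>x. \<Sum>i<m. c i * b i x) (b j) = L2ip g (b j)"
    using L2_projection_onto_span_exists[of m b g] b g by blast
  define \<phi> where "\<phi> = (\<lambda>x. \<Sum>i<m. c i * b i x)"
  have \<phi>: "\<phi> \<in> Vh N k"
    unfolding \<phi>_def using b by (intro Vh_sum) auto
  have "L2ip \<phi> w = L2ip g w" if w: "w \<in> Vh N k" for w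
  proof -
    obtain d where d: "w = (\<lambda>x. \<Sum>i<m. d i * b i x)" using span w by blast
    have "L2ip \<phi> w = (\<Sum>i<m. d i * L2ip \<phi> (b i))"
      unfolding d using \<phi> b by (intro L2ip_sum_right Vh_integrable_mult) auto
    also have "\<dots> = (\<Sum>i<m. d i * L2ip g (b i))"
      using c by (simp add: \<phi>_def)
    also have "\<dots> = L2ip g w"
      unfolding d using b g by (intro L2ip_sum_right[symmetric]) auto
    finally show ?thesis .
  qed
  then show "\<exists>\<phi>. \<phi> \<in> Vh N k \<and> (\<forall>w\<in>Vh N k. L2ip \<phi> w = L2ip g w)"
    using \<phi> by blast
next
  fix \<phi> \<psi>
  assume \<phi>: "\<phi> \<in> Vh N k \<and> (\<forall>w\<in>Vh N k. L2ip \<phi> w = L2ip g w)"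
    and \<psi>: "\<psi> \<in> Vh N k \<and> (\<forall>w\<in>Vh N k. L2ip \<psi> w = L2ip g w)"
  define e where "e = (\<lambda>x. \<phi> x - \<psi> x)"
  have e: "e \<in> Vh N k"
    using Vh_lincomb[of \<phi> N k \<psi> 1 "-1"] \<phi> \<psi> by (simp add: e_def)
  have "L2ip e e = L2ip \<phi> e - L2ip \<psi> e"
    unfolding e_def using \<phi> \<psi> e[unfolded e_def] by (intro L2ip_diff_left Vh_integrable_mult) auto
  also have "\<dots> = 0" using \<phi> \<psi> e by simp
  finally have "e x = 0" if "x \<in> {0..1}" for x
    using L2ip_self_eq_0_imp_eq_0[OF Vh_continuous[OF e] _ that] by blast
  then have "e = (\<lambda>x. 0)"
    by (rule Vh_eq_0_if_eq_0_on_unit_interval[OF e])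
  then show "\<phi> = \<psi>"
    unfolding e_def by (simp add: fun_eq_iff)
qed

lemma L2proj_characterization:
  assumes "N \<ge> 1" "\<And>\<phi>. \<phi> \<in> Vh N k \<Longrightarrow> (\<lambda>x. g x * \<phi> x) integrable_on {0..1}"
  shows "L2proj N k g \<in> Vh N k \<and> (\<forall>w\<in>Vh N k. L2ip (L2proj N k g) w = L2ip g w)"
  unfolding L2proj_def by (rule theI'[OF ex1_L2_projection_Vh[OF assms]])

section \<open>Integration by parts\<close>

lemma has_real_derivative_if_eq_poly_on:
  assumes "\<forall>y\<in>{a..b}. f y = poly p y" "x \<in> {a<..<b}"
  shows "(f has_real_derivative poly (pderiv p) x) (at x)"
  by (rule has_field_derivative_transform_within_open[OF poly_DERIV[of p x], of "{a<..<b}"])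
     (use assms in auto)

lemma integrable_on_unit_interval_if_integrable_on_cells:
  fixes f :: "real \<Rightarrow> real"
  assumes "N \<ge> 1" "\<forall>i\<in>{1..N}. f integrable_on cell N i"
  shows "f integrable_on {0..1}"
proof -
  have "f integrable_on {0 .. real m / real N}" if "m \<le> N" for m
    using that
  proof (induction m)
    case 0
    then show ?case using integrable_on_refl[of f 0] by simp
  next
    case (Suc m)
    have cell: "f integrable_on {real m / real N .. real (Suc m) / real N}"
      using assms(2) Suc.prems by (metis atLeastAtMost_iff diff_Suc_1 le_add1 plus_1_eq_Suc)
    have left: "f integrable_on {0 .. real m / real N}"
      using Suc by simp
    have "real m / real N \<le> real (Suc m) / real N"
      by (simp add: divide_right_mono)
    from Henstock_Kurzweil_Integration.integrable_combine[OF _ this left cell] show ?case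
      by simp
  qed
  from this[of N] show ?thesis using assms(1) by simp
qed

lemma Vh_integrable_mult_deriv:
  assumes "N \<ge> 1" "\<phi> \<in> Vh N k" "\<psi> \<in> Vh N k"
  shows "(\<lambda>x. \<phi> x * deriv \<psi> x) integrable_on {0..1}"
proof (rule integrable_on_unit_interval_if_integrable_on_cells[OF assms(1)], intro ballI)
  fix i assume i: "i \<in> {1..N}"
  obtain p where p: "\<forall>x\<in>cell N i. \<phi> x = poly p x"
    using Vh_poly_on_cell[OF assms(2) i] by blast
  obtain q where q: "\<forall>x\<in>cell N i. \<psi> x = poly q x"
    using Vh_poly_on_cell[OF assms(3) i] by blast
  have eq: "\<phi> x * deriv \<psi> x = poly p x * poly (pderiv q) x"
    if "x \<in> cell N i - {real (i - 1) / real N, real i / real N}" for x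
    using that p DERIV_imp_deriv[OF has_real_derivative_if_eq_poly_on[OF q]] by auto
  have int: "(\<lambda>x. poly p x * poly (pderiv q) x) integrable_on cell N i"
    by (intro integrable_continuous_interval continuous_intros)
  show "(\<lambda>x. \<phi> x * deriv \<psi> x) integrable_on cell N i"
    by (rule integrable_spike_finite[where S = "{real (i - 1) / real N, real i / real N}", OF _ eq int])
      simp
qed

text \<open>Away from the nodes \<open>\<phi> \<psi>\<close> is smooth, so the fundamental theorem of calculus applies
  on \<open>[0, 1]\<close>; the boundary terms cancel by periodicity.\<close>
lemma L2ip_deriv_antisym:
  assumes "N \<ge> 1" "\<phi> \<in> Vh N k" "\<psi> \<in> Vh N k"
  shows "L2ip \<phi> (deriv \<psi>) = - L2ip \<psi> (deriv \<phi>)"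
proof -
  let ?nodes = "(\<lambda>j. real j / real N) ` {..N}"
  have "((\<lambda>x. \<phi> x * \<psi> x) has_real_derivative \<phi> x * deriv \<psi> x + deriv \<phi> x * \<psi> x) (at x)"
    if x: "x \<in> {0<..<1} - ?nodes" for x
  proof -
    obtain i where i: "i \<in> {1..N}" "x \<in> {real (i - 1) / real N <..< real i / real N}"
      using unit_interval_covered_by_open_cells[OF assms(1)] x by blast
    obtain p q where "\<forall>x\<in>cell N i. \<phi> x = poly p x" "\<forall>x\<in>cell N i. \<psi> x = poly q x"
      using Vh_poly_on_cell[OF assms(2) i(1)] Vh_poly_on_cell[OF assms(3) i(1)] by blast
    note d = this[THEN has_real_derivative_if_eq_poly_on, OF i(2)]
    from DERIV_mult'[OF d] show ?thesis
      by (simp add: DERIV_imp_deriv[OF d(1)] DERIV_imp_deriv[OF d(2)] add.commute)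
  qed
  moreover have "continuous_on {0..1} (\<lambda>x. \<phi> x * \<psi> x)"
    using Vh_continuous[OF assms(2)] Vh_continuous[OF assms(3)] by (rule continuous_on_mult)
  ultimately have "((\<lambda>x. \<phi> x * deriv \<psi> x + deriv \<phi> x * \<psi> x) has_integral \<phi> 1 * \<psi> 1 - \<phi> 0 * \<psi> 0) {0..1}"
    by (intro fundamental_theorem_of_calculus_interior_strong[where S = ?nodes])
       (simp_all add: has_real_derivative_iff_has_vector_derivative)
  then have "integral {0..1} (\<lambda>x. \<phi> x * deriv \<psi> x + deriv \<phi> x * \<psi> x) = \<phi> 1 * \<psi> 1 - \<phi> 0 * \<psi> 0"
    by (rule integral_unique)
  also have "\<dots> = 0"
    using Vh_periodic[OF assms(2), of 0] Vh_periodic[OF assms(3), of 0] by simp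
  finally have "integral {0..1} (\<lambda>x. \<phi> x * deriv \<psi> x + deriv \<phi> x * \<psi> x) = 0" .
  moreover have "(\<lambda>x. deriv \<phi> x * \<psi> x) integrable_on {0..1}"
    using Vh_integrable_mult_deriv[OF assms(1,3,2)] by (simp add: mult.commute)
  ultimately have "L2ip \<phi> (deriv \<psi>) + integral {0..1} (\<lambda>x. deriv \<phi> x * \<psi> x) = 0"
    using Vh_integrable_mult_deriv[OF assms] by (simp add: L2ip_def integral_add)
  then show ?thesis
    by (simp add: L2ip_def mult.commute)
qed

lemma L2ip_deriv_self: "N \<ge> 1 \<Longrightarrow> \<phi> \<in> Vh N k \<Longrightarrow> L2ip \<phi> (deriv \<phi>) = 0"
  using L2ip_deriv_antisym[of N \<phi> k \<phi>] by simp

section \<open>Differentiation under the integral sign\<close>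

lemma Vh_family_continuous_on_Times:
  fixes F :: "'a::topological_space \<Rightarrow> real \<Rightarrow> real"
  assumes "N \<ge> 1" "closed S" "\<forall>s\<in>S. F s \<in> Vh N k"
    and "\<forall>x. continuous_on S (\<lambda>s. F s x)"
  shows "continuous_on (S \<times> {0..1}) (\<lambda>(s, x). F s x)"
proof -
  have cover: "S \<times> {0..1} = (\<Union>i\<in>{1..N}. S \<times> cell N i)"
  proof
    show "S \<times> {0..1} \<subseteq> (\<Union>i\<in>{1..N}. S \<times> cell N i)"
    proof
      fix p :: "'a \<times> real"
      assume p: "p \<in> S \<times> {0..1}"
      then obtain i where "i \<in> {1..N}" "snd p \<in> cell N i"
        using unit_interval_covered_by_cells[OF assms(1)] by (metis mem_Times_iff)
      with p show "p \<in> (\<Union>i\<in>{1..N}. S \<times> cell N i)"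
        by (auto simp: mem_Times_iff)
    qed
    show "(\<Union>i\<in>{1..N}. S \<times> cell N i) \<subseteq> S \<times> {0..1}"
      using cell_subset_unit_interval by blast
  qed
  have "continuous_on (S \<times> cell N i) (\<lambda>p. F (fst p) (snd p))" if i: "i \<in> {1..N}" for i
  proof -
    have "continuous_on (S \<times> cell N i)
        (\<lambda>p. \<Sum>j\<le>k. F (fst p) (cell_node N k i j) * poly (lagrange_basis (cell_node N k i) k j) (snd p))"
    proof (intro continuous_intros)
      fix j
      show "continuous_on (S \<times> cell N i) (\<lambda>p. F (fst p) (cell_node N k i j))"
        by (rule continuous_on_compose2[OF assms(4)[rule_format] continuous_on_fst]) auto
    qed
    then show ?thesis
      by (rule continuous_on_eq)
         (use Vh_lagrange_representation[OF _ assms(1) i] assms(3) in \<open>auto simp: mem_Times_iff\<close>)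
  qed
  then have "continuous_on (\<Union>i\<in>{1..N}. S \<times> cell N i) (\<lambda>p. F (fst p) (snd p))"
    using assms(2) by (intro continuous_on_closed_Union) (auto intro: closed_Times)
  then show ?thesis
    unfolding cover by (simp add: case_prod_beta)
qed

lemma has_real_derivative_mass:
  assumes "convex S" "t \<in> S"
    and "\<And>s x. s \<in> S \<Longrightarrow> ((\<lambda>s. u s x) has_real_derivative ut s x) (at s within S)"
    and "\<And>s. s \<in> S \<Longrightarrow> continuous_on {0..1} (u s)"
    and "continuous_on (S \<times> {0..1}) (\<lambda>(s, x). ut s x)"
  shows "((\<lambda>s. mass (u s)) has_real_derivative integral {0..1} (ut t)) (at t within S)"
proof -
  have "((\<lambda>s. integral (cbox 0 1) (u s)) has_real_derivative integral (cbox 0 1) (ut t))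
      (at t within S)"
    by (rule leibniz_rule_field_derivative[where fx = ut])
       (use assms in \<open>auto simp: cbox_interval intro: integrable_continuous_interval\<close>)
  then show ?thesis
    by (simp add: mass_def cbox_interval)
qed

lemma has_real_derivative_energy:
  assumes "convex S" "t \<in> S"
    and deriv: "\<And>s x. s \<in> S \<Longrightarrow> ((\<lambda>s. u s x) has_real_derivative ut s x) (at s within S)"
    and space: "\<And>s. s \<in> S \<Longrightarrow> continuous_on {0..1} (u s)"
    and "continuous_on (S \<times> {0..1}) (\<lambda>(s, x). u s x)"
    and "continuous_on (S \<times> {0..1}) (\<lambda>(s, x). ut s x)"
  shows "((\<lambda>s. energy (u s)) has_real_derivative
           integral {0..1} (\<lambda>x. (u t x + (u t x)\<^sup>2 / 2) * ut t x)) (at t within S)"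
proof -
  have u: "continuous_on (S \<times> {0..1}) (\<lambda>p. u (fst p) (snd p))"
    and ut: "continuous_on (S \<times> {0..1}) (\<lambda>p. ut (fst p) (snd p))"
    using assms(5,6) by (simp_all add: case_prod_beta)
  have "continuous_on (S \<times> {0..1})
      (\<lambda>p. (u (fst p) (snd p) + (u (fst p) (snd p))\<^sup>2 / 2) * ut (fst p) (snd p))"
    by (intro continuous_on_mult continuous_on_add continuous_on_divide continuous_on_power
        continuous_on_const u ut) simp
  then have "((\<lambda>s. integral (cbox 0 1) (\<lambda>x. 1/2 * ((u s x)\<^sup>2 + (u s x)^3 / 3))) has_real_derivative
      integral (cbox 0 1) (\<lambda>x. (u t x + (u t x)\<^sup>2 / 2) * ut t x)) (at t within S)"
  proof (intro leibniz_rule_field_derivative[where fx = "\<lambda>s x. (u s x + (u s x)\<^sup>2 / 2) * ut s x"])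
    fix s x assume "s \<in> S"
    show "((\<lambda>s. 1/2 * ((u s x)\<^sup>2 + (u s x)^3 / 3)) has_real_derivative
        (u s x + (u s x)\<^sup>2 / 2) * ut s x) (at s within S)"
      using deriv[OF \<open>s \<in> S\<close>, of x]
      by (auto intro!: derivative_eq_intros simp: power2_eq_square algebra_simps)
  next
    fix s assume "s \<in> S"
    show "(\<lambda>x. 1/2 * ((u s x)\<^sup>2 + (u s x)^3 / 3)) integrable_on cbox 0 1"
      unfolding cbox_interval using space[OF \<open>s \<in> S\<close>]
      by (intro integrable_continuous_interval continuous_on_mult continuous_on_add
          continuous_on_divide continuous_on_power continuous_on_const) auto
  qed (use assms(1,2) in \<open>auto simp: cbox_interval case_prod_beta\<close>)
  then show ?thesis
    by (simp add: energy_def cbox_interval)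
qed

section \<open>The semi-discrete scheme\<close>

lemma scheme_imp_integral_eq_0:
  assumes "\<forall>w\<in>Vh N k. L2ip v w + L2ip p (deriv w) = L2ip q (deriv w)"
  shows "integral {0..1} v = 0"
proof -
  have "L2ip v (\<lambda>x. 1) + L2ip p (deriv (\<lambda>x. 1)) = L2ip q (deriv (\<lambda>x. 1))"
    using assms Vh_const by blast
  then show ?thesis by (simp add: L2ip_def)
qed

lemma scheme_imp_L2ip_eq_0:
  assumes "N \<ge> 1" "v \<in> Vh N k"
    and g: "\<And>\<phi>. \<phi> \<in> Vh N k \<Longrightarrow> (\<lambda>x. g x * \<phi> x) integrable_on {0..1}"
    and scheme: "\<forall>w\<in>Vh N k.
      L2ip v w + L2ip (L2proj N k (deriv v)) (deriv w) = L2ip (L2proj N k g) (deriv w)"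
  shows "L2ip g v = 0"
proof -
  define w where "w = L2proj N k g"
  define z where "z = L2proj N k (deriv v)"
  have w: "w \<in> Vh N k" "L2ip w v = L2ip g v"
    using L2proj_characterization[OF assms(1) g] assms(2) by (auto simp: w_def)
  have "\<phi> \<in> Vh N k \<Longrightarrow> (\<lambda>x. deriv v x * \<phi> x) integrable_on {0..1}" for \<phi>
    using Vh_integrable_mult_deriv[OF assms(1) _ assms(2)] by (simp add: mult.commute)
  then have z: "z \<in> Vh N k" "L2ip z v = L2ip (deriv v) v"
    using L2proj_characterization[OF assms(1)] assms(2) by (auto simp: z_def)
  have "L2ip v z = L2ip v (deriv v)"
    using z(2) by (simp add: L2ip_commute)
  also have "\<dots> = 0"
    using L2ip_deriv_self[OF assms(1,2)] .
  finally have "L2ip w (deriv z) = 0"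
    using scheme[rule_format, OF z(1)] L2ip_deriv_self[OF assms(1) z(1)] by (simp add: w_def z_def)
  then have "L2ip z (deriv w) = 0"
    using L2ip_deriv_antisym[OF assms(1) w(1) z(1)] by simp
  then have "L2ip v w = 0"
    using scheme[rule_format, OF w(1)] L2ip_deriv_self[OF assms(1) w(1)] by (simp add: w_def z_def)
  then show ?thesis
    using w(2) by (simp add: L2ip_commute)
qed

theorem proposition3p1:
  fixes N k :: nat and T :: real and u ut :: "real \<Rightarrow> real \<Rightarrow> real"
  assumes "k \<ge> 1" and "N \<ge> 1" and "T > 0"
    and u_in: "\<forall>t\<in>{0..T}. u t \<in> Vh N k"
    and ut_in: "\<forall>t\<in>{0..T}. ut t \<in> Vh N k"
    and u_deriv: "\<forall>t\<in>{0..T}. \<forall>x. ((\<lambda>s. u s x) has_real_derivative ut t x) (at t within {0..T})"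
    and ut_cont: "\<forall>x. continuous_on {0..T} (\<lambda>t. ut t x)"
    and scheme: "\<forall>t\<in>{0..T}. \<forall>w\<in>Vh N k.
        L2ip (ut t) w + L2ip (L2proj N k (deriv (ut t))) (deriv w)
        = L2ip (L2proj N k (\<lambda>x. u t x + (u t x)\<^sup>2 / 2)) (deriv w)"
  shows "\<forall>t\<in>{0..T}. ((\<lambda>s. mass (u s)) has_real_derivative 0) (at t within {0..T})
           \<and> ((\<lambda>s. energy (u s)) has_real_derivative 0) (at t within {0..T})"
proof
  fix t assume t: "t \<in> {0..T}"
  have "\<forall>x. continuous_on {0..T} (\<lambda>s. u s x)"
    using u_deriv by (auto simp: continuous_on_eq_continuous_within intro: DERIV_continuous)
  then have u_joint: "continuous_on ({0..T} \<times> {0..1}) (\<lambda>(s, x). u s x)"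
    using Vh_family_continuous_on_Times[OF \<open>N \<ge> 1\<close> _ u_in] by simp
  have ut_joint: "continuous_on ({0..T} \<times> {0..1}) (\<lambda>(s, x). ut s x)"
    using Vh_family_continuous_on_Times[OF \<open>N \<ge> 1\<close> _ ut_in ut_cont] by simp
  have u_space: "continuous_on {0..1} (u s)" if "s \<in> {0..T}" for s
    using u_in that by (intro Vh_continuous[of "u s" N k]) simp
  note scheme_t = bspec[OF scheme t]
  have "(\<lambda>x. (u t x + (u t x)\<^sup>2 / 2) * \<phi> x) integrable_on {0..1}" if "\<phi> \<in> Vh N k" for \<phi>
    using u_space[OF t] Vh_continuous[OF that]
    by (intro integrable_continuous_mult continuous_on_add continuous_on_divide continuous_on_power
        continuous_on_const) auto
  then have "L2ip (\<lambda>x. u t x + (u t x)\<^sup>2 / 2) (ut t) = 0"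
    using ut_in t by (intro scheme_imp_L2ip_eq_0[OF \<open>N \<ge> 1\<close> _ _ scheme_t]) auto
  moreover have "integral {0..1} (ut t) = 0"
    by (rule scheme_imp_integral_eq_0[OF scheme_t])
  moreover have "((\<lambda>s. mass (u s)) has_real_derivative integral {0..1} (ut t)) (at t within {0..T})"
    using u_deriv by (intro has_real_derivative_mass t u_space ut_joint) auto
  moreover have "((\<lambda>s. energy (u s)) has_real_derivative
      integral {0..1} (\<lambda>x. (u t x + (u t x)\<^sup>2 / 2) * ut t x)) (at t within {0..T})"
    using u_deriv by (intro has_real_derivative_energy t u_space u_joint ut_joint) auto
  ultimately show "((\<lambda>s. mass (u s)) has_real_derivative 0) (at t within {0..T})
      \<and> ((\<lambda>s. energy (u s)) has_real_derivative 0) (at t within {0..T})"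
    by (simp add: L2ip_def)
qed

end
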